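(* Let $\sigma$ and $\sigma'$ be two distinct translated copies of a regular $k$-gon in $\mathbb{R}^2$, $k\ge 4$, whose interiors have a non-empty intersection. Let $p$ be any point in $\sigma\cap\sigma'$. Let $x$ and $y$ be two points of $\partial\sigma\cap\partial\sigma'$ lying in two different connected components of $\partial\sigma\cap\partial\sigma'$. Then the angle $\angle xpy$ of the triangle $\triangle xpy$ is at least $\frac{\pi}{4}$.
   Context: $\partial\sigma$ denotes the boundary of $\sigma$. A connected component of a set is a maximal connected subset of it. *)

theory Defs
  imports "HOL-Analysis.Analysis"
begin

text \<open>The plane R^2 is modelled as the complex numbers. A regular k-gon is the
convex hull of k points equally spaced on a circle of positive radius r
centred at c, with arbitrary rotation phase th.\<close>

definition regular_polygon :: "nat \<Rightarrow> complex \<Rightarrow> real \<Rightarrow> real \<Rightarrow> complex set" where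
  "regular_polygon k c r th =
     convex hull {c + complex_of_real r * cis (th + 2 * pi * real j / real k) | j. j < k}"

definition is_regular_polygon :: "nat \<Rightarrow> complex set \<Rightarrow> bool" where
  "is_regular_polygon k S \<longleftrightarrow> (\<exists>c r th. r > 0 \<and> S = regular_polygon k c r th)"

definition angle_at :: "complex \<Rightarrow> complex \<Rightarrow> complex \<Rightarrow> real" where
  "angle_at x p y = arccos (inner (x - p) (y - p) / (norm (x - p) * norm (y - p)))"

end

theory Submission
  imports Defs
begin

text \<open>Write \<open>\<sigma>' = \<sigma> + t\<close>. If \<open>y - x\<close> were parallel to \<open>t\<close>, the whole segment \<open>[x, y]\<close> would
  lie in \<open>\<partial>\<sigma> \<inter> \<partial>\<sigma>'\<close>, contradicting that \<open>x\<close> and \<open>y\<close> lie in different components. So the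
  line \<open>xy\<close> is transversal to \<open>t\<close> and meets \<open>\<sigma>\<close> and \<open>\<sigma>'\<close> only in \<open>[x, y]\<close>; if \<open>p\<close> lies on
  it, the angle is \<open>pi\<close>. Otherwise, exchanging the roles of \<open>\<sigma>\<close> and \<open>\<sigma>'\<close> if necessary, \<open>p\<close>
  lies on the side of the line towards which \<open>t\<close> points, and at every point of \<open>\<sigma>\<close> strictly
  on that side every outer normal of \<open>\<sigma>\<close> has a nonnegative component along \<open>t\<close>.

  A vertex of \<open>\<sigma>\<close> whose angle is within \<open>pi/2 + pi/k\<close> of the direction of \<open>-t\<close> has an edge
  normal pointing against \<open>t\<close>, so it lies on the other side. These vertices form a cap of the
  circumcircle of half-angle \<open>\<gamma> \<ge> pi/2 - pi/k \<ge> pi/4\<close>, and by convexity the whole part of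
  \<open>\<sigma>\<close> beyond the chord \<open>w\<^sub>1w\<^sub>2\<close> joining the extreme vertices of the cap lies on the other
  side too. So \<open>p\<close> is a point of the circumdisc on the near side of that chord and sees it
  under an angle \<open>\<ge> \<gamma>\<close> (inscribed angle theorem); since \<open>[x, y]\<close> separates \<open>p\<close> from
  \<open>w\<^sub>1\<close> and \<open>w\<^sub>2\<close> inside \<open>\<sigma>\<close>, the angle \<open>xpy\<close> is at least as large.\<close>

section \<open>Vertices of a regular polygon\<close>

lemma cos_add_2pi_int: "cos (x + 2 * pi * of_int m) = cos x"
  by (simp add: cos_add)

lemma cis_add_2pi_int: "cis (x + 2 * pi * of_int m) = cis x"
  by (simp add: complex_eq_iff cos_add sin_add)

lemma cos_odd_multiple_le:
  assumes k: "k \<ge> (1::nat)" and q: "odd (q::int)"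
  shows "cos (of_int q * pi / real k) \<le> cos (pi / real k)"
proof -
  define M where "M = (q + int k) div (2 * int k)"
  define q' where "q' = q - 2 * int k * M"
  have "q + int k = 2 * int k * M + (q + int k) mod (2 * int k)"
    unfolding M_def by simp
  moreover have "0 \<le> (q + int k) mod (2 * int k)" "(q + int k) mod (2 * int k) < 2 * int k"
    using k by simp_all
  ultimately have q'_bounds: "\<bar>q'\<bar> \<le> int k" unfolding q'_def by linarith
  have "odd q'" unfolding q'_def using q by simp
  hence q'_pos: "1 \<le> \<bar>q'\<bar>" by (cases "q' = 0") auto
  have "of_int q * pi / real k = of_int q' * pi / real k + 2 * pi * of_int M"
    unfolding q'_def using k by (simp add: field_simps)
  hence "cos (of_int q * pi / real k) = cos (of_int q' * pi / real k)"
    by (simp only: cos_add_2pi_int)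
  also have "\<dots> = cos (of_int \<bar>q'\<bar> * pi / real k)"
    by (cases "q' \<ge> 0") (simp_all only: abs_of_nonneg abs_of_neg not_le of_int_minus
        mult_minus_left divide_minus_left cos_minus)
  also have "\<dots> \<le> cos (pi / real k)"
  proof (rule cos_monotone_0_pi_le)
    show "pi / real k \<le> of_int \<bar>q'\<bar> * pi / real k"
      using q'_pos k by (simp add: divide_right_mono)
    have "of_int \<bar>q'\<bar> \<le> real k" using q'_bounds by linarith
    thus "of_int \<bar>q'\<bar> * pi / real k \<le> pi" using k by (simp add: field_simps)
  qed simp
  finally show ?thesis .
qed

lemma cos_ge_imp_near_multiple_2pi:
  assumes "0 \<le> g" "g \<le> pi" "cos g \<le> cos x"
  obtains M :: int where "\<bar>x - 2 * pi * of_int M\<bar> \<le> g"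
proof -
  define M where "M = \<lfloor>(x + pi) / (2 * pi)\<rfloor>"
  define x' where "x' = x - 2 * pi * of_int M"
  have "of_int M \<le> (x + pi) / (2 * pi)" "(x + pi) / (2 * pi) < of_int M + 1"
    unfolding M_def by linarith+
  hence "- pi \<le> x'" "x' < pi" unfolding x'_def by (simp_all add: field_simps)
  moreover have "cos \<bar>x'\<bar> = cos x"
    using cos_add_2pi_int[of x' M] unfolding x'_def by (cases "x' \<ge> 0") simp_all
  ultimately have "\<bar>x'\<bar> \<le> g"
    using cos_mono_le_eq[of g "\<bar>x'\<bar>"] assms by auto
  thus ?thesis using that unfolding x'_def by blast
qed

text \<open>Vertices are indexed by all integers, periodically, so that a vertex in a prescribed
  angular window can be chosen by rounding.\<close>

definition vertex_angle :: "nat \<Rightarrow> real \<Rightarrow> int \<Rightarrow> real" where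
  "vertex_angle k th J = th + 2 * pi * of_int J / real k"

definition vertex :: "nat \<Rightarrow> complex \<Rightarrow> real \<Rightarrow> real \<Rightarrow> int \<Rightarrow> complex" where
  "vertex k c r th J = c + of_real r * cis (vertex_angle k th J)"

lemma vertex_angle_eq: "vertex_angle k th J = th + of_int J * (2 * pi / real k)"
  unfolding vertex_angle_def by simp

lemma vertex_mod:
  assumes "k > 0"
  shows "vertex k c r th J = vertex k c r th (J mod int k)"
proof -
  have "(of_int J :: real) = real k * of_int (J div int k) + of_int (J mod int k)"
    by (metis div_mult_mod_eq mult.commute of_int_add of_int_mult of_int_of_nat_eq)
  hence "vertex_angle k th J = vertex_angle k th (J mod int k) + 2 * pi * of_int (J div int k)"
    unfolding vertex_angle_def using assms by (simp add: field_simps)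
  thus ?thesis unfolding vertex_def by (simp only: cis_add_2pi_int)
qed

lemma regular_polygon_eq_convex_hull_vertices:
  "regular_polygon k c r th = convex hull ((\<lambda>j. vertex k c r th (int j)) ` {..<k})"
proof -
  have "{c + complex_of_real r * cis (th + 2 * pi * real j / real k) | j. j < k} =
        (\<lambda>j. vertex k c r th (int j)) ` {..<k}"
    unfolding vertex_def vertex_angle_def by auto
  thus ?thesis unfolding regular_polygon_def by simp
qed

lemma vertex_in_regular_polygon:
  assumes "k > 0"
  shows "vertex k c r th J \<in> regular_polygon k c r th"
proof -
  have "vertex k c r th J = vertex k c r th (int (nat (J mod int k)))"
    using vertex_mod[OF assms] assms by simp
  moreover have "nat (J mod int k) < k" using assms by (simp add: nat_less_iff)
  ultimately show ?thesis
    unfolding regular_polygon_eq_convex_hull_vertices by (intro hull_inc) blast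
qed

lemma convex_regular_polygon: "convex (regular_polygon k c r th)"
  unfolding regular_polygon_def by (rule convex_convex_hull)

lemma closed_regular_polygon: "closed (regular_polygon k c r th)"
  unfolding regular_polygon_eq_convex_hull_vertices
  by (intro compact_imp_closed compact_convex_hull finite_imp_compact) simp

lemma regular_polygon_subset_convex:
  assumes "convex P" "\<And>j. j < k \<Longrightarrow> vertex k c r th (int j) \<in> P"
  shows "regular_polygon k c r th \<subseteq> P"
  unfolding regular_polygon_eq_convex_hull_vertices by (rule hull_minimal) (use assms in auto)

lemma translation_regular_polygon:
  "(+) t ` regular_polygon k c r th = regular_polygon k (t + c) r th"
proof -
  have "(+) t ` {c + complex_of_real r * cis (th + 2 * pi * real j / real k) | j. j < k} =
        {(t + c) + complex_of_real r * cis (th + 2 * pi * real j / real k) | j. j < k}"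
    by (auto simp: add.assoc)
  thus ?thesis unfolding regular_polygon_def convex_hull_translation[symmetric] by simp
qed

lemma regular_polygon_subset_cball:
  assumes "r \<ge> 0"
  shows "regular_polygon k c r th \<subseteq> cball c r"
proof (rule regular_polygon_subset_convex)
  fix j
  have "norm (vertex k c r th (int j) - c) = r"
    using assms unfolding vertex_def by (simp add: norm_mult)
  thus "vertex k c r th (int j) \<in> cball c r" by (simp add: dist_norm norm_minus_commute)
qed simp

lemma inner_cis_cis: "inner (cis a) (cis b) = cos (b - a)"
  by (simp add: inner_complex_def cos_diff)

lemma inner_cis_vertex_minus_centre:
  "inner (cis a) (vertex k c r th J - c) = r * cos (vertex_angle k th J - a)"
  unfolding vertex_def by (simp add: inner_complex_def cos_diff algebra_simps)

lemma regular_polygon_edge_normals: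
  assumes k: "k \<ge> 1" and r: "r \<ge> 0" and e: "e = 1 \<or> e = -1"
    and z: "z \<in> regular_polygon k c r th"
  shows "inner (cis (vertex_angle k th J + of_int e * pi / real k)) (z - vertex k c r th J) \<le> 0"
proof -
  define n where "n = cis (vertex_angle k th J + of_int e * pi / real k)"
  have "inner n (vertex k c r th (int j) - vertex k c r th J) \<le> 0" for j
  proof -
    have "vertex_angle k th (int j) - (vertex_angle k th J + of_int e * pi / real k)
          = of_int (2 * (int j - J) - e) * pi / real k"
      unfolding vertex_angle_def using k by (simp add: field_simps)
    moreover have "cos (of_int (2 * (int j - J) - e) * pi / real k) \<le> cos (pi / real k)"
      by (rule cos_odd_multiple_le[OF k]) (use e in auto)
    moreover have "cos (- (of_int e * pi / real k)) = cos (pi / real k)"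
      using e by auto
    moreover have "inner n (vertex k c r th (int j) - vertex k c r th J) =
        inner n (vertex k c r th (int j) - c) - inner n (vertex k c r th J - c)"
      by (simp add: inner_diff_right)
    ultimately show ?thesis
      using r unfolding n_def inner_cis_vertex_minus_centre by (simp add: mult_left_mono)
  qed
  moreover have "convex {z. inner n (z - vertex k c r th J) \<le> 0}"
    by (simp add: inner_diff_right convex_halfspace_le)
  ultimately have "regular_polygon k c r th \<subseteq> {z. inner n (z - vertex k c r th J) \<le> 0}"
    by (intro regular_polygon_subset_convex) auto
  thus ?thesis using z unfolding n_def by blast
qed

lemma exists_vertex_angle_above:
  assumes "k > 0"
  obtains J where "a < vertex_angle k th J" "vertex_angle k th J \<le> a + 2 * pi / real k"
proof
  define d where "d = 2 * pi / real k"
  have d: "d > 0" unfolding d_def using assms by simp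
  define J where "J = \<lfloor>(a - th) / d\<rfloor> + 1"
  have "of_int J - 1 \<le> (a - th) / d" "(a - th) / d < of_int J"
    unfolding J_def by linarith+
  hence "(of_int J - 1) * d \<le> a - th" "a - th < of_int J * d"
    using d by (simp_all add: pos_le_divide_eq pos_divide_less_eq)
  thus "a < vertex_angle k th J" "vertex_angle k th J \<le> a + 2 * pi / real k"
    unfolding vertex_angle_eq d_def[symmetric] by (simp_all add: left_diff_distrib)
qed

lemma exists_vertex_angle_below:
  assumes "k > 0"
  obtains J where "a \<le> vertex_angle k th J" "vertex_angle k th J < a + 2 * pi / real k"
proof
  define d where "d = 2 * pi / real k"
  have d: "d > 0" unfolding d_def using assms by simp
  define J where "J = \<lceil>(a - th) / d\<rceil>"
  have "(a - th) / d \<le> of_int J" "of_int J - 1 < (a - th) / d"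
    unfolding J_def by linarith+
  hence "a - th \<le> of_int J * d" "(of_int J - 1) * d < a - th"
    using d by (simp_all add: pos_divide_le_eq pos_less_divide_eq)
  thus "a \<le> vertex_angle k th J" "vertex_angle k th J < a + 2 * pi / real k"
    unfolding vertex_angle_eq d_def[symmetric] by (simp_all add: left_diff_distrib)
qed

lemma vertex_normal_towards:
  assumes k: "k \<ge> 3" and r: "r \<ge> 0"
    and near: "\<bar>vertex_angle k th J - 2 * pi * of_int M - \<phi>\<bar> < pi / 2 + pi / real k"
  obtains n where "\<forall>z\<in>regular_polygon k c r th. inner n (z - vertex k c r th J) \<le> 0"
    "inner n (cis \<phi>) > 0"
proof -
  define \<psi> where "\<psi> = vertex_angle k th J - 2 * pi * of_int M - \<phi>"
  define e :: int where "e = (if \<psi> \<le> 0 then 1 else -1)"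
  have "pi / real k < pi / 2" by (rule divide_strict_left_mono) (use k in auto)
  moreover have "of_int e * pi / real k = (if \<psi> \<le> 0 then pi / real k else - (pi / real k))"
    unfolding e_def by simp
  ultimately have "- (pi / 2) < \<psi> + of_int e * pi / real k \<and> \<psi> + of_int e * pi / real k < pi / 2"
    using near pi_gt_zero unfolding \<psi>_def[symmetric]
    by (cases "\<psi> \<le> 0") (simp_all only: if_True if_False, linarith+)
  hence "cos (\<psi> + of_int e * pi / real k) > 0" by (intro cos_gt_zero_pi) auto
  moreover have "\<phi> - (vertex_angle k th J + of_int e * pi / real k) =
      - (\<psi> + of_int e * pi / real k) + 2 * pi * of_int (- M)"
    unfolding \<psi>_def by simp
  hence "cos (\<phi> - (vertex_angle k th J + of_int e * pi / real k)) = cos (\<psi> + of_int e * pi / real k)"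
    by (simp only: cos_add_2pi_int cos_minus)
  moreover have "\<forall>z\<in>regular_polygon k c r th.
      inner (cis (vertex_angle k th J + of_int e * pi / real k)) (z - vertex k c r th J) \<le> 0"
    using regular_polygon_edge_normals[OF _ r, where e = e] k unfolding e_def by simp
  ultimately show ?thesis using that inner_cis_cis by metis
qed

lemma regular_polygon_cap_normals_towards:
  assumes k: "k \<ge> 4" and r: "r > 0"
  obtains \<mu> \<gamma> J1 J2 where "pi / 4 \<le> \<gamma>" "\<gamma> < pi"
    "vertex k c r th J1 = c + of_real r * cis (\<mu> - \<gamma>)"
    "vertex k c r th J2 = c + of_real r * cis (\<mu> + \<gamma>)"
    "\<And>J. r * cos \<gamma> \<le> inner (cis \<mu>) (vertex k c r th J - c) \<Longrightarrow>
       \<exists>n. (\<forall>z\<in>regular_polygon k c r th. inner n (z - vertex k c r th J) \<le> 0) \<and>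
           inner n (cis \<phi>) > 0"
proof -
  have kpos: "k > 0" and k3: "k \<ge> 3" using k by simp_all
  define d where "d = pi / real k"
  have d: "d \<le> pi / 4" unfolding d_def by (rule divide_left_mono) (use k in auto)
  have two_d: "2 * pi / real k = 2 * d" unfolding d_def by simp
  obtain J1 where J1: "\<phi> - pi / 2 - d < vertex_angle k th J1"
      "vertex_angle k th J1 \<le> \<phi> - pi / 2 - d + 2 * d"
    using exists_vertex_angle_above[OF kpos] unfolding two_d by blast
  obtain J2 where J2: "\<phi> + pi / 2 - d \<le> vertex_angle k th J2"
      "vertex_angle k th J2 < \<phi> + pi / 2 - d + 2 * d"
    using exists_vertex_angle_below[OF kpos] unfolding two_d by blast
  define \<mu> where "\<mu> = (vertex_angle k th J1 + vertex_angle k th J2) / 2"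
  define \<gamma> where "\<gamma> = (vertex_angle k th J2 - vertex_angle k th J1) / 2"
  have two_\<mu>: "2 * \<mu> = vertex_angle k th J1 + vertex_angle k th J2" unfolding \<mu>_def by simp
  have two_\<gamma>: "2 * \<gamma> = vertex_angle k th J2 - vertex_angle k th J1" unfolding \<gamma>_def by simp
  have \<gamma>: "pi / 4 \<le> \<gamma>" "\<gamma> < pi"
    using J1 J2 d pi_gt_zero two_\<gamma> by linarith+
  show ?thesis
  proof (rule that[OF \<gamma>, of J1 \<mu> J2])
    show "vertex k c r th J1 = c + of_real r * cis (\<mu> - \<gamma>)"
      "vertex k c r th J2 = c + of_real r * cis (\<mu> + \<gamma>)"
      unfolding vertex_def \<mu>_def \<gamma>_def by (simp_all add: field_simps)
    fix J assume "r * cos \<gamma> \<le> inner (cis \<mu>) (vertex k c r th J - c)"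
    hence "cos \<gamma> \<le> cos (vertex_angle k th J - \<mu>)"
      using r unfolding inner_cis_vertex_minus_centre by simp
    then obtain M :: int where "\<bar>vertex_angle k th J - \<mu> - 2 * pi * of_int M\<bar> \<le> \<gamma>"
      using cos_ge_imp_near_multiple_2pi[of \<gamma>] \<gamma> pi_gt_zero by auto
    hence "\<bar>vertex_angle k th J - 2 * pi * of_int M - \<phi>\<bar> < pi / 2 + pi / real k"
      using J1 J2 two_\<gamma> two_\<mu> d_def by linarith
    then obtain n where "\<forall>z\<in>regular_polygon k c r th. inner n (z - vertex k c r th J) \<le> 0"
        "inner n (cis \<phi>) > 0"
      using vertex_normal_towards[OF k3 less_imp_le[OF r]] by blast
    thus "\<exists>n. (\<forall>z\<in>regular_polygon k c r th. inner n (z - vertex k c r th J) \<le> 0) \<and>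
           inner n (cis \<phi>) > 0" by blast
  qed
qed

section \<open>Angles between complex numbers\<close>

definition cos_angle :: "complex \<Rightarrow> complex \<Rightarrow> real" where
  "cos_angle u v = inner u v / (norm u * norm v)"

lemma cos_angle_commute: "cos_angle u v = cos_angle v u"
  unfolding cos_angle_def by (simp add: inner_commute mult.commute)

lemma cos_angle_self: "z \<noteq> 0 \<Longrightarrow> cos_angle z z = 1"
  unfolding cos_angle_def by (simp add: power2_norm_eq_inner[symmetric] power2_eq_square)

lemma cos_angle_le_1: "cos_angle u v \<le> 1"
  unfolding cos_angle_def
  by (cases "u = 0 \<or> v = 0") (auto simp: divide_le_eq_1 norm_cauchy_schwarz)

lemma cos_angle_ge_minus_1: "cos_angle u v \<ge> -1"
proof (cases "u = 0 \<or> v = 0")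
  case False
  have "\<bar>inner u v\<bar> \<le> norm u * norm v" by (rule Cauchy_Schwarz_ineq2)
  thus ?thesis unfolding cos_angle_def using False by (simp add: le_divide_eq)
qed (auto simp: cos_angle_def)

lemma cos_angle_mult_left: "a \<noteq> 0 \<Longrightarrow> cos_angle (a * u) (a * v) = cos_angle u v"
proof -
  assume a: "a \<noteq> 0"
  have "inner (a * u) (a * v) = ((Re a)^2 + (Im a)^2) * inner u v"
    by (simp add: inner_complex_def algebra_simps power2_eq_square)
  hence "inner (a * u) (a * v) = (norm a)^2 * inner u v" by (simp only: cmod_power2)
  moreover have "norm (a * u) * norm (a * v) = (norm a)^2 * (norm u * norm v)"
    by (simp add: norm_mult power2_eq_square)
  ultimately show ?thesis unfolding cos_angle_def using a by simp
qed

lemma cos_angle_scale_pos: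
  assumes "l > 0" "m > 0"
  shows "cos_angle (of_real l * u) (of_real m * v) = cos_angle u v"
proof -
  have "inner (of_real l * u) (of_real m * v) = l * m * inner u v"
    by (simp add: inner_complex_def algebra_simps)
  moreover have "norm (of_real l * u) * norm (of_real m * v) = l * m * (norm u * norm v)"
    using assms by (simp add: norm_mult)
  ultimately show ?thesis unfolding cos_angle_def using assms by simp
qed

lemma cos_angle_1_left: "cos_angle 1 z = Re z / norm z"
  unfolding cos_angle_def by (simp add: inner_complex_def)

lemma mult_sqrt_le_mult_sqrt:
  fixes a b A B :: real
  assumes "0 \<le> b" "0 \<le> A" "0 \<le> B" "a^2 * A \<le> b^2 * B"
  shows "a * sqrt A \<le> b * sqrt B"
proof (cases "a \<le> 0")
  case True
  thus ?thesis using assms by (simp add: mult_nonpos_nonneg order_trans[of _ 0])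
next
  case False
  have "(a * sqrt A)^2 \<le> (b * sqrt B)^2"
    using assms by (simp add: power_mult_distrib)
  thus ?thesis by (rule power2_le_imp_le) (use assms in simp)
qed

text \<open>Coordinate form of \<open>cos_angle_1_le_segment\<close> below, for \<open>Z = X + i Y\<close>.\<close>

lemma Re_segment_from_one_ineq:
  fixes X Y \<mu> :: real
  assumes \<mu>: "0 \<le> \<mu>" "\<mu> \<le> 1"
  defines "P \<equiv> 1 - \<mu> + \<mu> * X"
  shows "X * sqrt (P^2 + (\<mu> * Y)^2) \<le> P * sqrt (X^2 + Y^2)"
proof -
  have sq: "P^2 * (X^2 + Y^2) - X^2 * (P^2 + (\<mu> * Y)^2) = P^2 * Y^2 - (\<mu> * X)^2 * Y^2"
    by (simp add: algebra_simps power_mult_distrib)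
  have "\<mu> * X \<le> P" unfolding P_def using \<mu> by simp
  consider "X \<le> 0" "P \<ge> 0" | "P < 0" | "X > 0" by linarith
  thus ?thesis
  proof cases
    case 1
    thus ?thesis by (simp add: mult_nonpos_nonneg order_trans[of _ 0])
  next
    case 2
    have "X < 0"
    proof (rule ccontr)
      assume "\<not> X < 0"
      hence "\<mu> * X \<ge> 0" using \<mu> by simp
      thus False using 2 \<mu> unfolding P_def by linarith
    qed
    have "(-P)^2 \<le> (-(\<mu> * X))^2" using 2 \<open>\<mu> * X \<le> P\<close> by (intro power_mono) linarith+
    hence "(-P)^2 * (X^2 + Y^2) \<le> (-X)^2 * (P^2 + (\<mu> * Y)^2)"
      using sq mult_right_mono[of "(-P)^2" "(\<mu> * X)^2" "Y^2"] by simp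
    hence "(-P) * sqrt (X^2 + Y^2) \<le> (-X) * sqrt (P^2 + (\<mu> * Y)^2)"
      using \<open>X < 0\<close> by (intro mult_sqrt_le_mult_sqrt) simp_all
    thus ?thesis by simp
  next
    case 3
    hence "0 \<le> \<mu> * X" using \<mu> by simp
    with \<open>\<mu> * X \<le> P\<close> have "(\<mu> * X)^2 \<le> P^2" by (rule power_mono)
    hence "X^2 * (P^2 + (\<mu> * Y)^2) \<le> P^2 * (X^2 + Y^2)"
      using sq mult_right_mono[of "(\<mu> * X)^2" "P^2" "Y^2"] by simp
    thus ?thesis
      using \<open>0 \<le> \<mu> * X\<close> \<open>\<mu> * X \<le> P\<close> by (intro mult_sqrt_le_mult_sqrt) simp_all
  qed
qed

lemma cos_angle_1_le_segment:
  assumes \<mu>: "0 \<le> \<mu>" "\<mu> \<le> 1" and Z: "Z \<noteq> 0"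
    and W: "W = of_real (1 - \<mu>) + of_real \<mu> * Z" "W \<noteq> 0"
  shows "cos_angle 1 Z \<le> cos_angle 1 W"
proof -
  have "Re W = 1 - \<mu> + \<mu> * Re Z" "Im W = \<mu> * Im Z" unfolding W(1) by simp_all
  hence "Re Z * norm W \<le> Re W * norm Z"
    using Re_segment_from_one_ineq[OF \<mu>, of "Re Z" "Im Z"] by (simp add: cmod_def)
  thus ?thesis using Z W(2) unfolding cos_angle_1_left by (simp add: field_simps)
qed

lemma cos_angle_le_segment_point:
  assumes u: "u1 \<noteq> 0" "u2 \<noteq> 0" and \<mu>: "0 \<le> \<mu>" "\<mu> \<le> 1"
    and w: "w = of_real (1 - \<mu>) * u1 + of_real \<mu> * u2" "w \<noteq> 0"
  shows "cos_angle u1 u2 \<le> cos_angle u1 w"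
proof -
  have "w / u1 = of_real (1 - \<mu>) + of_real \<mu> * (u2 / u1)"
    using u(1) unfolding w(1) by (simp add: field_simps)
  hence "cos_angle 1 (u2 / u1) \<le> cos_angle 1 (w / u1)"
    by (intro cos_angle_1_le_segment[OF \<mu>]) (use u w(2) in auto)
  moreover have "cos_angle u1 v = cos_angle 1 (v / u1)" for v
    using cos_angle_mult_left[OF u(1), of 1 "v / u1"] u(1) by simp
  ultimately show ?thesis by simp
qed

lemma cos_angle_le_subsegment:
  assumes ab: "a \<noteq> 0" "b \<noteq> 0"
    and z1: "z1 = of_real (1 - \<mu>1) * a + of_real \<mu>1 * b" "z1 \<noteq> 0"
    and z2: "z2 = of_real (1 - \<mu>2) * a + of_real \<mu>2 * b" "z2 \<noteq> 0"
    and \<mu>: "0 \<le> \<mu>1" "\<mu>1 \<le> 1" "0 \<le> \<mu>2" "\<mu>2 \<le> 1"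
  shows "cos_angle a b \<le> cos_angle z1 z2"
proof -
  have ordered: "cos_angle a b \<le> cos_angle w1 w2"
    if w1: "w1 = of_real (1 - \<nu>1) * a + of_real \<nu>1 * b" "w1 \<noteq> 0"
      and w2: "w2 = of_real (1 - \<nu>2) * a + of_real \<nu>2 * b" "w2 \<noteq> 0"
      and \<nu>: "0 \<le> \<nu>1" "\<nu>1 \<le> \<nu>2" "\<nu>2 \<le> 1" for w1 w2 \<nu>1 \<nu>2
  proof (cases "\<nu>2 = 0")
    case True
    hence "w1 = w2" using \<nu> w1 w2 by simp
    thus ?thesis using cos_angle_self[OF w1(2)] cos_angle_le_1[of a b] by simp
  next
    case False
    hence "\<nu>2 > 0" using \<nu> by simp
    define \<rho> where "\<rho> = 1 - \<nu>1 / \<nu>2"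
    have "cos_angle a b \<le> cos_angle a w2"
      by (rule cos_angle_le_segment_point[OF ab _ _ w2]) (use \<nu> in auto)
    moreover have "0 \<le> \<rho>" "\<rho> \<le> 1" unfolding \<rho>_def using \<nu> \<open>\<nu>2 > 0\<close> by (auto simp: divide_simps)
    moreover have "w1 = of_real (1 - \<rho>) * w2 + of_real \<rho> * a"
      unfolding \<rho>_def w1(1) w2(1) using \<open>\<nu>2 > 0\<close> by (simp add: field_simps)
    ultimately show ?thesis
      using cos_angle_le_segment_point[OF w2(2) ab(1), of \<rho> w1] w1(2)
      by (simp add: cos_angle_commute)
  qed
  show ?thesis
  proof (cases "\<mu>1 \<le> \<mu>2")
    case True
    thus ?thesis using ordered[OF z1 z2] \<mu> by simp
  next
    case False
    thus ?thesis using ordered[OF z2 z1] \<mu> by (simp add: cos_angle_commute)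
  qed
qed

lemma cos_angle_opposite:
  assumes "p \<in> closed_segment x y" "p \<noteq> x" "p \<noteq> y"
  shows "cos_angle (x - p) (y - p) = -1"
proof -
  obtain u where u: "0 \<le> u" "u \<le> 1" "p = of_real (1 - u) * x + of_real u * y"
    using assms(1) unfolding closed_segment_def scaleR_conv_of_real by blast
  have "u \<noteq> 0" "u \<noteq> 1" using u assms(2,3) by auto
  have "x - p = of_real u * (x - y)" "y - p = of_real (1 - u) * (- (x - y))"
    using u(3) by (simp_all add: algebra_simps)
  hence "cos_angle (x - p) (y - p) = cos_angle (x - y) (- (x - y))"
    using cos_angle_scale_pos[of u "1 - u"] u \<open>u \<noteq> 0\<close> \<open>u \<noteq> 1\<close> by simp
  also have "\<dots> = -1"
  proof -
    have "x \<noteq> y" using assms by auto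
    moreover have "inner (x - y) (- (x - y)) = - (norm (x - y) ^ 2)"
      by (simp only: inner_minus_right power2_norm_eq_inner)
    ultimately show ?thesis unfolding cos_angle_def by (simp add: power2_eq_square norm_minus_commute)
  qed
  finally show ?thesis .
qed

lemma inscribed_angle_real_ineq:
  fixes A C S P D :: real
  assumes "A \<ge> 0" "C^2 + S^2 = 1" "P \<le> 2 * A * C" "D \<ge> 0" "D^2 = P^2 + 4 * A^2 * S^2"
  shows "P \<le> C * D"
proof -
  have CD: "(C * D)^2 = C^2 * P^2 + (2 * A * C)^2 * S^2"
    using assms(5) by (simp add: power_mult_distrib algebra_simps)
  have PP: "P^2 = C^2 * P^2 + P^2 * S^2"
    using assms(2) by (metis mult.commute mult_1 distrib_left)
  show ?thesis
  proof (cases "C \<ge> 0")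
    case True
    show ?thesis
    proof (cases "P \<le> 0")
      case False
      hence "P^2 \<le> (2 * A * C)^2" using assms(3) by (intro power_mono) simp_all
      hence "P^2 * S^2 \<le> (2 * A * C)^2 * S^2" by (rule mult_right_mono) simp
      hence "P^2 \<le> (C * D)^2" using CD PP by linarith
      thus ?thesis by (rule power2_le_imp_le) (use True assms(4) in simp)
    qed (use True assms(4) mult_nonneg_nonneg[of C D] in linarith)
  next
    case False
    hence AC: "2 * A * C \<le> 0" using assms(1) by (simp add: mult_nonneg_nonpos)
    hence "(2 * A * C)^2 \<le> P^2" using assms(3) power_mono[of "- (2 * A * C)" "- P" 2] by simp
    hence "(2 * A * C)^2 * S^2 \<le> P^2 * S^2" by (rule mult_right_mono) simp
    hence "(C * D)^2 \<le> P^2" using CD PP by linarith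
    hence "(- (C * D))^2 \<le> (- P)^2" by simp
    hence "- (C * D) \<le> - P" by (rule power2_le_imp_le) (use AC assms(3) in simp)
    thus ?thesis by simp
  qed
qed

lemma inscribed_angle_unit_circle:
  assumes z: "norm z \<le> 1" "Re z \<le> cos \<gamma>" "z \<noteq> cis (- \<gamma>)" "z \<noteq> cis \<gamma>"
  shows "cos_angle (cis (- \<gamma>) - z) (cis \<gamma> - z) \<le> cos \<gamma>"
proof -
  define A where "A = cos \<gamma> - Re z"
  define y where "y = Im z"
  define P where "P = A^2 - (sin \<gamma>)^2 + y^2"
  define N1 where "N1 = A^2 + (sin \<gamma> + y)^2"
  define N2 where "N2 = A^2 + (sin \<gamma> - y)^2"
  have u1: "cis (- \<gamma>) - z = Complex A (- sin \<gamma> - y)"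
    and u2: "cis \<gamma> - z = Complex A (sin \<gamma> - y)"
    unfolding A_def y_def by (simp_all add: complex_eq_iff)
  have inner_eq: "inner (cis (- \<gamma>) - z) (cis \<gamma> - z) = P"
    unfolding u1 u2 P_def by (simp add: inner_complex_def power2_eq_square algebra_simps)
  moreover have "norm (cis (- \<gamma>) - z) = sqrt N1" "norm (cis \<gamma> - z) = sqrt N2"
    unfolding u1 u2 N1_def N2_def cmod_def by (simp_all add: power2_eq_square algebra_simps)
  moreover have "norm (cis (- \<gamma>) - z) > 0" "norm (cis \<gamma> - z) > 0" using z(3,4) by auto
  ultimately have "N1 * N2 > 0" and norms: "norm (cis (- \<gamma>) - z) * norm (cis \<gamma> - z) = sqrt (N1 * N2)"
    by (simp_all add: real_sqrt_mult)
  moreover have "P \<le> cos \<gamma> * sqrt (N1 * N2)"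
  proof (rule inscribed_angle_real_ineq)
    show "A \<ge> 0" unfolding A_def using z(2) by simp
    have "(Re z)^2 + y^2 \<le> 1" unfolding y_def using z(1)
      by (metis cmod_power2 power_le_one norm_ge_zero)
    thus "P \<le> 2 * A * cos \<gamma>"
      unfolding P_def A_def using sin_cos_squared_add[of \<gamma>] by (simp add: power2_eq_square algebra_simps)
    show "(sqrt (N1 * N2))^2 = P^2 + 4 * A^2 * (sin \<gamma>)^2"
      using \<open>N1 * N2 > 0\<close> unfolding N1_def N2_def P_def by (simp add: power2_eq_square algebra_simps)
  qed (use \<open>N1 * N2 > 0\<close> in \<open>simp_all add: sin_cos_squared_add2\<close>)
  ultimately show ?thesis unfolding cos_angle_def norms inner_eq using \<open>N1 * N2 > 0\<close>
    by (simp add: divide_le_eq mult.commute)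
qed

lemma inner_cis_mult: "inner (cis m) (cis m * z) = Re z"
proof -
  have "inner (cis m) (cis m * z) = Re z * ((cos m)\<^sup>2 + (sin m)\<^sup>2)"
    unfolding inner_complex_def by (simp add: power2_eq_square algebra_simps del: sin_cos_squared_add3)
  thus ?thesis by simp
qed

lemma inscribed_angle_cos_le:
  assumes r: "r > 0" and q: "norm (q - c) \<le> r" "inner (cis \<mu>) (q - c) \<le> r * cos \<gamma>"
    and w1: "w1 = c + of_real r * cis (\<mu> - \<gamma>)" and w2: "w2 = c + of_real r * cis (\<mu> + \<gamma>)"
    and qw: "q \<noteq> w1" "q \<noteq> w2"
  shows "cos_angle (w1 - q) (w2 - q) \<le> cos \<gamma>"
proof -
  define a where "a = of_real r * cis \<mu>"
  have a: "a \<noteq> 0" unfolding a_def using r by simp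
  define z where "z = (q - c) / a"
  have qz: "q - c = a * z" unfolding z_def using a by simp
  have "cis (\<mu> - \<gamma>) = cis \<mu> * cis (- \<gamma>)" "cis (\<mu> + \<gamma>) = cis \<mu> * cis \<gamma>"
    by (simp_all add: cis_mult)
  hence e: "w1 - q = a * (cis (- \<gamma>) - z)" "w2 - q = a * (cis \<gamma> - z)"
    unfolding w1 w2 using qz unfolding a_def by (simp_all add: algebra_simps diff_eq_eq)
  have "norm z \<le> 1"
    using q(1) r unfolding qz a_def by (simp add: norm_mult mult_le_cancel_left1)
  moreover have "q - c = r *\<^sub>R (cis \<mu> * z)"
    unfolding qz a_def by (simp add: scaleR_conv_of_real)
  hence "inner (cis \<mu>) (q - c) = r * Re z"
    by (simp only: inner_scaleR_right inner_cis_mult)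
  hence "Re z \<le> cos \<gamma>" using q(2) r by simp
  moreover have "z \<noteq> cis (- \<gamma>)" "z \<noteq> cis \<gamma>" using qw e by auto
  ultimately have "cos_angle (cis (- \<gamma>) - z) (cis \<gamma> - z) \<le> cos \<gamma>"
    by (rule inscribed_angle_unit_circle)
  thus ?thesis unfolding e cos_angle_mult_left[OF a] .
qed

section \<open>Supporting lines of planar convex sets\<close>

definition cross :: "complex \<Rightarrow> complex \<Rightarrow> real" where
  "cross a b = Re a * Im b - Im a * Re b"

lemma cross_add_right: "cross a (b + c) = cross a b + cross a c"
  unfolding cross_def by (simp add: algebra_simps)

lemma cross_diff_right: "cross a (b - c) = cross a b - cross a c"
  unfolding cross_def by (simp add: algebra_simps)

lemma cross_of_real_mult_right: "cross a (of_real s * b) = s * cross a b"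
  unfolding cross_def by (simp add: algebra_simps)

lemma cross_self [simp]: "cross a a = 0"
  unfolding cross_def by simp

lemma cross_zero_left [simp]: "cross 0 b = 0"
  unfolding cross_def by simp

lemma cross_zero_right [simp]: "cross a 0 = 0"
  unfolding cross_def by simp

lemma cross_minus_right: "cross a (- b) = - cross a b"
  unfolding cross_def by simp

lemma cross_eq_inner: "cross a b = inner (\<i> * a) b"
  unfolding cross_def by (simp add: inner_complex_def)

lemma inner_of_real_mult_right: "inner a (of_real s * b) = s * inner (a::complex) b"
  by (simp add: inner_complex_def algebra_simps)

lemma cross_eq_0_imp_parallel:
  assumes "cross t w = 0" "t \<noteq> 0"
  shows "w = of_real (inner t w / (norm t)^2) * t"
proof -
  have "cnj t * w = of_real (inner t w)"
    using assms(1) by (simp add: complex_eq_iff cross_def inner_complex_def algebra_simps)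
  moreover have "cnj t * t = of_real ((norm t)^2)"
    by (metis complex_norm_square mult.commute of_real_power)
  ultimately show ?thesis using assms(2)
    by (simp add: field_simps) (metis mult.assoc mult.commute)
qed

lemma convex_frontier_supporting_normal:
  fixes S :: "'a::euclidean_space set"
  assumes "convex S" "interior S \<noteq> {}" "x \<in> frontier S"
  obtains n where "n \<noteq> 0" "\<And>z. z \<in> S \<Longrightarrow> inner n (z - x) \<le> 0"
proof -
  have "x \<in> closure S" "x \<notin> rel_interior S"
    using assms(3) rel_interior_nonempty_interior[OF assms(2)] unfolding frontier_def by auto
  then obtain a where "a \<noteq> 0" "\<And>y. y \<in> closure S \<Longrightarrow> a \<bullet> x \<le> a \<bullet> y"
    using supporting_hyperplane_relative_frontier[OF assms(1)] by metis
  thus ?thesis using that[of "- a"] closure_subset by (force simp: inner_diff_right)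
qed

lemma interior_in_open_halfspace:
  fixes S :: "'a::euclidean_space set"
  assumes "n \<noteq> 0" "\<And>z. z \<in> S \<Longrightarrow> inner n (z - a) \<le> 0" "w \<in> interior S"
  shows "inner n (w - a) < 0"
proof -
  have "S \<subseteq> {z. inner n z \<le> inner n a}" using assms(2) by (auto simp: inner_diff_right)
  hence "interior S \<subseteq> {z. inner n z < inner n a}"
    using interior_mono interior_halfspace_le[OF assms(1)] by blast
  thus ?thesis using assms(3) by (auto simp: inner_diff_right)
qed

lemma frontier_not_inside_splitting_chord:
  fixes S :: "complex set"
  assumes S: "convex S" "interior S \<noteq> {}" and x: "x \<in> frontier S"
    and d: "d \<noteq> 0" and \<alpha>\<beta>: "\<alpha> > 0" "\<beta> > 0"
    and chord: "x + of_real \<alpha> * d \<in> S" "x - of_real \<beta> * d \<in> S"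
    and u: "u1 \<in> S" "u2 \<in> S" "cross d (u1 - x) * cross d (u2 - x) < 0"
  shows False
proof -
  obtain n where n: "n \<noteq> 0" "\<And>z. z \<in> S \<Longrightarrow> inner n (z - x) \<le> 0"
    using convex_frontier_supporting_normal[OF S x] by blast
  have "\<alpha> * inner n d \<le> 0" "- (\<beta> * inner n d) \<le> 0"
    using n(2)[OF chord(1)] n(2)[OF chord(2)] by (simp_all add: inner_of_real_mult_right)
  hence "inner n d = 0" using \<alpha>\<beta> by (simp add: mult_le_0_iff zero_le_mult_iff)
  hence "cross (\<i> * d) n = 0" by (simp add: cross_eq_inner inner_commute)
  define l where "l = inner (\<i> * d) n / (norm (\<i> * d))^2"
  have n_eq: "n = of_real l * (\<i> * d)"
    unfolding l_def using cross_eq_0_imp_parallel \<open>cross (\<i> * d) n = 0\<close> d by simp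
  have "inner n (u - x) = l * cross d (u - x)" for u
    unfolding n_eq by (simp add: inner_commute[of _ "u - x"] inner_of_real_mult_right cross_eq_inner
        inner_commute)
  hence "l * cross d (u1 - x) \<le> 0" "l * cross d (u2 - x) \<le> 0" using n(2) u(1,2) by metis+
  hence "l = 0" using u(3) by (auto simp: mult_le_0_iff mult_less_0_iff)
  thus False using n(1) n_eq by simp
qed

lemma common_frontier_segment_along_translation:
  fixes S :: "complex set"
  assumes S: "convex S" "closed S" "interior S \<noteq> {}"
    and xy: "x \<in> S" "y \<in> S" "x - t \<in> S" "y - t \<in> frontier S"
    and s: "y - x = of_real s * t" "s > 0"
  shows "closed_segment x y \<subseteq> frontier S \<inter> frontier ((+) t ` S)"
proof
  fix w assume w: "w \<in> closed_segment x y"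
  obtain n where n: "n \<noteq> 0" "\<And>z. z \<in> S \<Longrightarrow> inner n (z - (y - t)) \<le> 0"
    using convex_frontier_supporting_normal[OF S(1,3) xy(4)] by blast
  have "inner n ((x - t) - (y - t)) \<le> 0" "inner n (y - (y - t)) \<le> 0"
    using n(2) xy(2,3) by blast+
  moreover have "(x - t) - (y - t) = - (of_real s * t)" using s(1) by (simp add: algebra_simps)
  ultimately have nt: "inner n t = 0"
    using s(2) by (simp add: inner_of_real_mult_right zero_le_mult_iff)
  have on_line: "v \<notin> interior S" if "v \<in> S" "v - (y - t) = of_real a * t" for v a
    using interior_in_open_halfspace[OF n] that(2) nt by (force simp: inner_of_real_mult_right)
  obtain u where u: "0 \<le> u" "u \<le> 1" "w = of_real (1 - u) * x + of_real u * y"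
    using w unfolding closed_segment_def scaleR_conv_of_real by blast
  have wS: "w \<in> S" using w convex_contains_segment S(1) xy(1,2) by blast
  have "w - (y - t) = of_real ((1 - u) * (- s) + 1) * t"
    using u(3) s(1) by (simp add: algebra_simps)
  hence "w \<notin> interior S" by (rule on_line[OF wS])
  hence wF: "w \<in> frontier S" using wS S(2) unfolding frontier_def by (simp add: closure_closed)
  have "y - t \<in> S" using xy(4) S(2) frontier_subset_closed by blast
  moreover have "w - t = (1 - u) *\<^sub>R (x - t) + u *\<^sub>R (y - t)"
    using u(3) by (simp add: scaleR_conv_of_real algebra_simps)
  ultimately have wtS: "w - t \<in> S" using convexD[OF S(1) xy(3)] u(1,2) by simp
  have "w - t - (y - t) = of_real ((1 - u) * (- s)) * t"
    using u(3) s(1) by (simp add: algebra_simps)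
  hence "w - t \<notin> interior S" by (rule on_line[OF wtS])
  hence "w - t \<in> frontier S" using wtS S(2) unfolding frontier_def by (simp add: closure_closed)
  hence "w \<in> frontier ((+) t ` S)" by (force simp: frontier_translation)
  thus "w \<in> frontier S \<inter> frontier ((+) t ` S)" using wF by blast
qed

lemma common_frontier_parallel_segment:
  fixes S :: "complex set"
  assumes S: "convex S" "closed S" "interior S \<noteq> {}" and t: "t \<noteq> 0"
    and x: "x \<in> frontier S \<inter> frontier ((+) t ` S)" and y: "y \<in> frontier S \<inter> frontier ((+) t ` S)"
    and par: "cross t (y - x) = 0"
  shows "closed_segment x y \<subseteq> frontier S \<inter> frontier ((+) t ` S)"
proof -
  have fS: "frontier S \<subseteq> S" using S(2) frontier_subset_closed by blast
  have xt: "x - t \<in> frontier S" and yt: "y - t \<in> frontier S"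
    using x y by (auto simp: frontier_translation)
  define s where "s = inner t (y - x) / (norm t)^2"
  have s: "y - x = of_real s * t" unfolding s_def using cross_eq_0_imp_parallel[OF par t] .
  consider "s > 0" | "s = 0" | "s < 0" by linarith
  thus ?thesis
  proof cases
    case 1
    show ?thesis
      by (rule common_frontier_segment_along_translation[OF S _ _ _ _ s 1]) (use x y xt yt fS in auto)
  next
    case 2
    thus ?thesis using s x by simp
  next
    case 3
    have "x - y = of_real (- s) * t" using s by (simp add: algebra_simps)
    from common_frontier_segment_along_translation[OF S _ _ _ _ this]
    have "closed_segment y x \<subseteq> frontier S \<inter> frontier ((+) t ` S)"
      using x y xt yt fS 3 by auto
    thus ?thesis by (simp add: closed_segment_commute)
  qed
qed

lemma convex_line_inter_in_segment:
  fixes S :: "complex set"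
  assumes S: "convex S" "closed S" "interior S \<noteq> {}"
    and xy: "x \<in> frontier S" "y \<in> frontier S" "x \<noteq> y"
    and z: "z \<in> S" "cross (y - x) (z - x) = 0"
    and u: "u1 \<in> S" "u2 \<in> S" "cross (y - x) (u1 - x) * cross (y - x) (u2 - x) < 0"
  shows "z \<in> closed_segment x y"
proof -
  have fS: "frontier S \<subseteq> S" using S(2) frontier_subset_closed by blast
  have d: "y - x \<noteq> 0" using xy(3) by simp
  define s where "s = inner (y - x) (z - x) / (norm (y - x))^2"
  have zx: "z = x + of_real s * (y - x)"
    using cross_eq_0_imp_parallel[OF z(2) d] unfolding s_def by (simp add: algebra_simps)
  have "\<not> s < 0"
  proof
    assume "s < 0"
    show False
    proof (rule frontier_not_inside_splitting_chord[OF S(1,3) xy(1) d _ _ _ _ u])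
      show "(1::real) > 0" "- s > 0" using \<open>s < 0\<close> by auto
      show "x + of_real 1 * (y - x) \<in> S" using xy(2) fS by auto
      show "x - of_real (- s) * (y - x) \<in> S" using z(1) zx by simp
    qed
  qed
  moreover have "\<not> s > 1"
  proof
    assume "s > 1"
    have shift: "cross (y - x) (u - y) = cross (y - x) (u - x)" for u
      using cross_diff_right[of "y - x" "u - x" "y - x"] by simp
    show False
    proof (rule frontier_not_inside_splitting_chord[OF S(1,3) xy(2) d, of "s - 1" 1 u1 u2])
      show "s - 1 > 0" "(1::real) > 0" using \<open>s > 1\<close> by auto
      show "y + of_real (s - 1) * (y - x) \<in> S" using z(1) zx by (simp add: algebra_simps)
      show "y - of_real 1 * (y - x) \<in> S" using xy(1) fS by auto
    qed (use u shift in auto)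
  qed
  ultimately have "0 \<le> s" "s \<le> 1" by auto
  moreover have "z = of_real (1 - s) * x + of_real s * y" using zx by (simp add: algebra_simps)
  ultimately show ?thesis unfolding closed_segment_def scaleR_conv_of_real by blast
qed

text \<open>The point of \<open>[y, v]\<close> level with \<open>x\<close> in the direction \<open>\<tau>\<close> lies beyond \<open>x\<close> along
  \<open>\<tau>\<close>, so \<open>x\<close> would be inside a chord of \<open>S\<close> parallel to \<open>\<tau>\<close> whose line separates \<open>v\<close>
  from \<open>y\<close>.\<close>

lemma frontier_not_between_beyond_chord:
  fixes S :: "complex set"
  assumes S: "convex S" "interior S \<noteq> {}"
    and xy: "x \<in> frontier S" "y \<in> S" "x - \<tau> \<in> S"
    and v: "v \<in> S" "cross (y - x) (v - x) * cross (y - x) \<tau> > 0"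
    and between: "(cross \<tau> v - cross \<tau> x) * (cross \<tau> x - cross \<tau> y) > 0"
  shows False
proof -
  define A where "A = cross \<tau> v - cross \<tau> x"
  define B where "B = cross \<tau> x - cross \<tau> y"
  define l where "l = B / (A + B)"
  have AB: "A * B > 0" using between unfolding A_def B_def .
  hence "(A > 0 \<and> B > 0) \<or> (A < 0 \<and> B < 0)" by (simp add: zero_less_mult_iff)
  hence l: "0 < l" "l < 1" "A + B \<noteq> 0"
    unfolding l_def by (auto simp: divide_pos_pos divide_neg_neg divide_less_eq)
  define w where "w = y + of_real l * (v - y)"
  have "w = (1 - l) *\<^sub>R y + l *\<^sub>R v" unfolding w_def by (simp add: scaleR_conv_of_real algebra_simps)
  hence wS: "w \<in> S" using convexD[OF S(1) xy(2) v(1)] l(1,2) by simp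
  have "cross \<tau> (w - x) = - B + l * (A + B)"
    unfolding w_def A_def B_def by (simp add: cross_diff_right cross_add_right cross_of_real_mult_right)
  hence "cross \<tau> (w - x) = 0" unfolding l_def using l(3) by simp
  moreover have "\<tau> \<noteq> 0" using v(2) by auto
  ultimately obtain s where ws: "w - x = of_real s * \<tau>" using cross_eq_0_imp_parallel by blast
  have "w - x = (y - x) + of_real l * ((v - x) - (y - x))" unfolding w_def by simp
  hence "cross (y - x) (w - x) = l * cross (y - x) (v - x)"
    by (simp only: cross_add_right cross_diff_right cross_of_real_mult_right cross_self) simp
  hence "s * cross (y - x) \<tau> = l * cross (y - x) (v - x)"
    unfolding ws by (simp add: cross_of_real_mult_right)
  hence "s * (cross (y - x) \<tau> * cross (y - x) \<tau>) > 0"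
    using v(2) l(1) by (metis mult.assoc mult.commute mult_pos_pos)
  hence "s > 0" by (auto simp: zero_less_mult_iff)
  show False
  proof (rule frontier_not_inside_splitting_chord[OF S xy(1) \<open>\<tau> \<noteq> 0\<close> \<open>s > 0\<close> zero_less_one])
    show "x + of_real s * \<tau> \<in> S" using wS ws by (metis add.commute diff_add_cancel)
    show "x - of_real 1 * \<tau> \<in> S" using xy(3) by simp
    have "cross \<tau> (v - x) * cross \<tau> (y - x) = - (A * B)"
      unfolding A_def B_def by (simp add: cross_diff_right algebra_simps)
    thus "cross \<tau> (v - x) * cross \<tau> (y - x) < 0" using AB by simp
  qed (use v(1) xy(2) in auto)
qed

lemma real_three_positions:
  fixes a b c :: real
  assumes "b \<noteq> c"
  obtains "(a - b) * (a - c) \<le> 0" | "(a - b) * (b - c) > 0" | "(a - c) * (c - b) > 0"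
proof (cases "(a - b) * (a - c) \<le> 0")
  case False
  hence "(a < b \<and> a < c) \<or> (b < a \<and> c < a)" by (auto simp: mult_le_0_iff not_le)
  moreover have "b < c \<or> c < b" using assms by linarith
  ultimately have "(a - b) * (b - c) > 0 \<or> (a - c) * (c - b) > 0"
    by (auto intro: mult_pos_pos mult_neg_neg)
  thus ?thesis using that by blast
qed (use that in blast)

lemma supporting_normal_level_with_chord:
  fixes S :: "complex set"
  assumes S: "convex S" and xy: "x \<in> S" "y \<in> S"
    and v: "v \<in> S" "cross (y - x) (v - x) * cross (y - x) \<tau> > 0"
    and level: "(cross \<tau> v - cross \<tau> x) * (cross \<tau> v - cross \<tau> y) \<le> 0"
    and n: "\<And>z. z \<in> S \<Longrightarrow> inner n (z - v) \<le> 0"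
  shows "inner n \<tau> \<ge> 0"
proof -
  have "cross (y - x) \<tau> \<noteq> 0" using v(2) by auto
  hence "cross \<tau> x \<noteq> cross \<tau> y" unfolding cross_def by (auto simp: algebra_simps)
  define l where "l = (cross \<tau> v - cross \<tau> x) / (cross \<tau> y - cross \<tau> x)"
  have "0 \<le> l" "l \<le> 1" using level \<open>cross \<tau> x \<noteq> cross \<tau> y\<close> unfolding l_def
    by (auto simp: mult_le_0_iff divide_simps)
  define z where "z = x + of_real l * (y - x)"
  have "z = (1 - l) *\<^sub>R x + l *\<^sub>R y" unfolding z_def by (simp add: scaleR_conv_of_real algebra_simps)
  hence zS: "z \<in> S" using convexD[OF S xy] \<open>0 \<le> l\<close> \<open>l \<le> 1\<close> by simp
  have "cross \<tau> (z - v) = cross \<tau> x + l * (cross \<tau> y - cross \<tau> x) - cross \<tau> v"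
    unfolding z_def by (simp add: cross_diff_right cross_add_right cross_of_real_mult_right)
  hence "cross \<tau> (z - v) = 0" unfolding l_def using \<open>cross \<tau> x \<noteq> cross \<tau> y\<close> by simp
  moreover have "\<tau> \<noteq> 0" using v(2) by auto
  ultimately obtain s where zs: "z - v = of_real s * \<tau>" using cross_eq_0_imp_parallel by blast
  have "v - x = of_real l * (y - x) - of_real s * \<tau>" using zs unfolding z_def
    by (simp add: algebra_simps)
  hence "cross (y - x) (v - x) = - s * cross (y - x) \<tau>"
    by (simp add: cross_diff_right cross_of_real_mult_right)
  hence "(- s) * (cross (y - x) \<tau> * cross (y - x) \<tau>) > 0" using v(2) by (simp add: mult.assoc)
  hence "s < 0" by (auto simp: mult_less_0_iff not_square_less_zero)
  thus ?thesis using n[OF zS] unfolding zs by (auto simp: inner_of_real_mult_right mult_le_0_iff)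
qed

lemma supporting_normal_beyond_chord:
  fixes S :: "complex set"
  assumes S: "convex S" "closed S" "interior S \<noteq> {}"
    and xy: "x \<in> frontier S" "y \<in> frontier S" "x - \<tau> \<in> S" "y - \<tau> \<in> S"
    and v: "v \<in> S" "cross (y - x) (v - x) * cross (y - x) \<tau> > 0"
    and n: "\<And>z. z \<in> S \<Longrightarrow> inner n (z - v) \<le> 0"
  shows "inner n \<tau> \<ge> 0"
proof -
  have xS: "x \<in> S" and yS: "y \<in> S" using xy S(2) frontier_subset_closed by auto
  have "cross (y - x) \<tau> \<noteq> 0" using v(2) by auto
  hence "cross \<tau> x \<noteq> cross \<tau> y" unfolding cross_def by (auto simp: algebra_simps)
  then show ?thesis
  proof (cases rule: real_three_positions[of "cross \<tau> x" "cross \<tau> y" "cross \<tau> v", case_names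
        level beyond_x beyond_y])
    case level
    thus ?thesis by (rule supporting_normal_level_with_chord[OF S(1) xS yS v _ n])
  next
    case beyond_x
    have False
      by (rule frontier_not_between_beyond_chord[OF S(1,3) xy(1) yS xy(3) v]) (use beyond_x in simp)
    thus ?thesis ..
  next
    case beyond_y
    have "cross (x - y) (v - y) = - cross (y - x) (v - x)" "cross (x - y) \<tau> = - cross (y - x) \<tau>"
      unfolding cross_def by (simp_all add: algebra_simps)
    hence False
      using frontier_not_between_beyond_chord[OF S(1,3) xy(2) xS xy(4) v(1)] v(2) beyond_y by simp
    thus ?thesis ..
  qed
qed

section \<open>Affine functions on a cap of a convex hull\<close>

lemma affine_cap_nonpos_from_outside:
  fixes L1 L2 G1 G2 s :: real
  assumes L1: "L1 < 0" and s: "0 \<le> s" "s \<le> 1" and L: "(1 - s) * L1 + s * L2 \<ge> 0"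
    and G2: "L2 \<ge> 0 \<Longrightarrow> G2 \<le> 0"
    and rim: "\<And>l. 0 \<le> l \<Longrightarrow> l \<le> 1 \<Longrightarrow> (1 - l) * L1 + l * L2 = 0 \<Longrightarrow> (1 - l) * G1 + l * G2 \<le> 0"
  shows "(1 - s) * G1 + s * G2 \<le> 0"
proof -
  have "L2 \<ge> 0"
  proof (rule ccontr)
    assume "\<not> L2 \<ge> 0"
    hence "s * L2 \<le> 0" using s by (simp add: mult_nonneg_nonpos)
    moreover have "(1 - s) * L1 \<le> 0" using s L1 by (simp add: mult_nonneg_nonpos)
    ultimately have "s * L2 = 0" "(1 - s) * L1 = 0" using L by linarith+
    thus False using L1 \<open>\<not> L2 \<ge> 0\<close> by simp
  qed
  hence G2: "G2 \<le> 0" by (rule G2)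
  define s0 where "s0 = L1 / (L1 - L2)"
  have "L1 - L2 < 0" using L1 \<open>L2 \<ge> 0\<close> by simp
  hence s0: "0 < s0" "s0 \<le> 1" "(1 - s0) * L1 + s0 * L2 = 0" "s0 \<le> s"
    using L1 L \<open>L2 \<ge> 0\<close> unfolding s0_def by (auto simp: field_simps)
  have "(1 - s0) * ((1 - s) * G1 + s * G2) = (1 - s) * ((1 - s0) * G1 + s0 * G2) + (s - s0) * G2"
    by (simp add: algebra_simps)
  also have "\<dots> \<le> 0"
    using rim[OF _ s0(2,3)] s0 s G2 by (simp add: add_nonpos_nonpos mult_nonneg_nonpos)
  finally have "(1 - s0) * ((1 - s) * G1 + s * G2) \<le> 0" .
  moreover have "s0 < 1 \<or> s = 1" using s0 s by linarith
  ultimately show ?thesis using G2 by (auto simp: mult_le_0_iff)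
qed

lemma affine_segment_cap_nonpos:
  fixes L1 L2 G1 G2 s :: real
  assumes s: "0 \<le> s" "s \<le> 1" and L: "(1 - s) * L1 + s * L2 \<ge> 0"
    and ends: "L1 \<ge> 0 \<Longrightarrow> G1 \<le> 0" "L2 \<ge> 0 \<Longrightarrow> G2 \<le> 0"
    and rim: "\<And>l. 0 \<le> l \<Longrightarrow> l \<le> 1 \<Longrightarrow> (1 - l) * L1 + l * L2 = 0 \<Longrightarrow> (1 - l) * G1 + l * G2 \<le> 0"
  shows "(1 - s) * G1 + s * G2 \<le> 0"
proof -
  consider "L1 \<ge> 0" "L2 \<ge> 0" | "L1 < 0" | "L2 < 0" by linarith
  thus ?thesis
  proof cases
    case 1
    thus ?thesis using ends s by (simp add: add_nonpos_nonpos mult_nonneg_nonpos)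
  next
    case 2
    thus ?thesis by (rule affine_cap_nonpos_from_outside[OF _ s L ends(2) rim])
  next
    case 3
    have "(1 - (1 - s)) * G2 + (1 - s) * G1 \<le> 0"
    proof (rule affine_cap_nonpos_from_outside[OF 3])
      fix l :: real assume "0 \<le> l" "l \<le> 1" "(1 - l) * L2 + l * L1 = 0"
      thus "(1 - l) * G2 + l * G1 \<le> 0" using rim[of "1 - l"] by (simp add: add.commute)
    qed (use s L ends(1) in \<open>auto simp: add.commute\<close>)
    thus ?thesis by (simp add: add.commute)
  qed
qed

lemma convex_hull_cap_nonpos:
  fixes L G :: "'a::real_vector \<Rightarrow> real"
  assumes L: "\<And>x y s. L ((1 - s) *\<^sub>R x + s *\<^sub>R y) = (1 - s) * L x + s * L y"
    and G: "\<And>x y s. G ((1 - s) *\<^sub>R x + s *\<^sub>R y) = (1 - s) * G x + s * G y"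
    and V: "\<And>v. v \<in> V \<Longrightarrow> L v \<ge> 0 \<Longrightarrow> G v \<le> 0"
    and rim: "\<And>z. z \<in> convex hull V \<Longrightarrow> L z = 0 \<Longrightarrow> G z \<le> 0"
    and z: "z \<in> convex hull V" "L z \<ge> 0"
  shows "G z \<le> 0"
proof -
  define T where "T = {z \<in> convex hull V. L z \<ge> 0 \<longrightarrow> G z \<le> 0}"
  have "convex T"
  proof (rule convexI)
    fix x y and u v :: real
    assume xy: "x \<in> T" "y \<in> T" and uv: "0 \<le> u" "0 \<le> v" "u + v = 1"
    hence u: "u = 1 - v" by simp
    have "(1 - v) *\<^sub>R x + v *\<^sub>R y \<in> convex hull V"
      using xy uv unfolding T_def by (intro convexD) auto
    moreover have "(1 - v) * G x + v * G y \<le> 0" if "(1 - v) * L x + v * L y \<ge> 0"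
    proof (rule affine_segment_cap_nonpos[OF _ _ that])
      show "0 \<le> v" "v \<le> 1" using uv by auto
      show "L x \<ge> 0 \<Longrightarrow> G x \<le> 0" "L y \<ge> 0 \<Longrightarrow> G y \<le> 0" using xy unfolding T_def by auto
      fix l :: real assume l: "0 \<le> l" "l \<le> 1" "(1 - l) * L x + l * L y = 0"
      have "(1 - l) *\<^sub>R x + l *\<^sub>R y \<in> convex hull V"
        using xy l(1,2) unfolding T_def by (intro convexD) auto
      thus "(1 - l) * G x + l * G y \<le> 0" using rim[of "(1 - l) *\<^sub>R x + l *\<^sub>R y"] l(3) by (simp add: L G)
    qed
    ultimately show "u *\<^sub>R x + v *\<^sub>R y \<in> T" unfolding T_def u by (simp add: L G)
  qed
  moreover have "V \<subseteq> T" using V hull_subset unfolding T_def by fast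
  ultimately have "convex hull V \<subseteq> T" by (metis hull_minimal)
  thus ?thesis using z unfolding T_def by blast
qed

section \<open>The angle bound\<close>

lemma cball_chord_in_segment:
  assumes r: "r > 0" and \<gamma>: "0 < \<gamma>" "\<gamma> < pi"
    and z: "norm (z - c) \<le> r" "inner (cis \<mu>) (z - c) = r * cos \<gamma>"
  shows "z \<in> closed_segment (c + of_real r * cis (\<mu> - \<gamma>)) (c + of_real r * cis (\<mu> + \<gamma>))"
proof -
  define \<zeta> where "\<zeta> = (z - c) / cis \<mu>"
  have z\<zeta>: "z - c = cis \<mu> * \<zeta>" unfolding \<zeta>_def by simp
  have Re\<zeta>: "Re \<zeta> = r * cos \<gamma>" using z(2) unfolding z\<zeta> inner_cis_mult .
  have "norm \<zeta> \<le> r" using z(1) unfolding z\<zeta> by (simp add: norm_mult)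
  hence "(Re \<zeta>)^2 + (Im \<zeta>)^2 \<le> r^2" by (metis cmod_power2 norm_ge_zero power_mono)
  moreover have "(r * cos \<gamma>)^2 + (r * sin \<gamma>)^2 = r^2"
    by (simp add: power_mult_distrib flip: distrib_left)
  ultimately have "\<bar>Im \<zeta>\<bar>^2 \<le> (r * sin \<gamma>)^2" using Re\<zeta> by simp
  moreover have rs: "r * sin \<gamma> > 0" using r \<gamma> by (simp add: sin_gt_zero)
  ultimately have "\<bar>Im \<zeta>\<bar> \<le> r * sin \<gamma>"
    using power2_le_imp_le[of "\<bar>Im \<zeta>\<bar>" "r * sin \<gamma>"] by simp
  define s where "s = (Im \<zeta> + r * sin \<gamma>) / (2 * (r * sin \<gamma>))"
  have s: "0 \<le> s" "s \<le> 1" unfolding s_def using \<open>\<bar>Im \<zeta>\<bar> \<le> r * sin \<gamma>\<close> rs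
    by (auto simp: divide_simps)
  have "2 * (r * sin \<gamma>) \<noteq> 0" using rs by linarith
  hence "s * (2 * (r * sin \<gamma>)) = Im \<zeta> + r * sin \<gamma>"
    using nonzero_eq_divide_eq s_def by blast
  hence "Im \<zeta> = r * (s * sin \<gamma> - (1 - s) * sin \<gamma>)" by (simp add: algebra_simps)
  hence \<zeta>_eq: "\<zeta> = of_real r * (of_real (1 - s) * cis (- \<gamma>) + of_real s * cis \<gamma>)"
    using Re\<zeta> by (simp add: complex_eq_iff algebra_simps)
  have "cis (\<mu> - \<gamma>) = cis \<mu> * cis (- \<gamma>)" "cis (\<mu> + \<gamma>) = cis \<mu> * cis \<gamma>"
    by (simp_all add: cis_mult)
  hence "of_real (1 - s) * (c + of_real r * cis (\<mu> - \<gamma>)) + of_real s * (c + of_real r * cis (\<mu> + \<gamma>))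
      = c + cis \<mu> * (of_real r * (of_real (1 - s) * cis (- \<gamma>) + of_real s * cis \<gamma>))"
    by (simp add: algebra_simps)
  also have "\<dots> = z" using z\<zeta> unfolding \<zeta>_eq[symmetric] by (simp add: algebra_simps)
  finally have "z = of_real (1 - s) * (c + of_real r * cis (\<mu> - \<gamma>)) +
      of_real s * (c + of_real r * cis (\<mu> + \<gamma>))" ..
  thus ?thesis using s unfolding closed_segment_def scaleR_conv_of_real by blast
qed

lemma cos_angle_le_if_segment_separates:
  assumes S: "convex S" and q: "q \<in> S" "cross (b - a) (q - a) > 0"
    and w: "w1 \<in> S" "w2 \<in> S" "cross (b - a) (w1 - a) \<le> 0" "cross (b - a) (w2 - a) \<le> 0"
    and line: "\<And>z. z \<in> S \<Longrightarrow> cross (b - a) (z - a) = 0 \<Longrightarrow> z \<in> closed_segment a b"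
  shows "cos_angle (a - q) (b - q) \<le> cos_angle (w1 - q) (w2 - q)"
proof -
  define G where "G z = cross (b - a) (z - a)" for z
  have meet: "\<exists>l \<mu>. 0 < l \<and> 0 \<le> \<mu> \<and> \<mu> \<le> 1 \<and>
      of_real l * (w - q) = of_real (1 - \<mu>) * (a - q) + of_real \<mu> * (b - q)"
    if "w \<in> S" "G w \<le> 0" for w
  proof -
    define l where "l = G q / (G q - G w)"
    have "G q > 0" using q(2) unfolding G_def .
    hence l: "0 < l" "l \<le> 1" unfolding l_def using that(2) by (auto simp: divide_simps)
    define m where "m = q + of_real l * (w - q)"
    have "m = (1 - l) *\<^sub>R q + l *\<^sub>R w" unfolding m_def by (simp add: scaleR_conv_of_real algebra_simps)
    hence mS: "m \<in> S" using convexD[OF S q(1) that(1)] l by simp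
    have "G m = G q + l * (G w - G q)"
      unfolding G_def m_def by (simp add: cross_diff_right cross_add_right cross_of_real_mult_right)
    also have "\<dots> = 0" unfolding l_def using \<open>G q > 0\<close> that(2) by (simp add: field_simps)
    finally have "cross (b - a) (m - a) = 0" unfolding G_def .
    with mS have "m \<in> closed_segment a b" by (rule line)
    then obtain \<mu> where \<mu>: "0 \<le> \<mu>" "\<mu> \<le> 1" "m = of_real (1 - \<mu>) * a + of_real \<mu> * b"
      unfolding closed_segment_def scaleR_conv_of_real by blast
    have "of_real l * (w - q) = m - q" unfolding m_def by simp
    also have "\<dots> = of_real (1 - \<mu>) * (a - q) + of_real \<mu> * (b - q)"
      unfolding \<mu>(3) by (simp add: algebra_simps)
    finally have "of_real l * (w - q) = of_real (1 - \<mu>) * (a - q) + of_real \<mu> * (b - q)" .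
    thus ?thesis using l(1) \<open>0 \<le> \<mu>\<close> \<open>\<mu> \<le> 1\<close> by blast
  qed
  obtain l1 \<mu>1 where 1: "0 < l1" "0 \<le> \<mu>1" "\<mu>1 \<le> 1"
      "of_real l1 * (w1 - q) = of_real (1 - \<mu>1) * (a - q) + of_real \<mu>1 * (b - q)"
    using meet[OF w(1)] w(3) unfolding G_def by blast
  obtain l2 \<mu>2 where 2: "0 < l2" "0 \<le> \<mu>2" "\<mu>2 \<le> 1"
      "of_real l2 * (w2 - q) = of_real (1 - \<mu>2) * (a - q) + of_real \<mu>2 * (b - q)"
    using meet[OF w(2)] w(4) unfolding G_def by blast
  have "a \<noteq> q" "b \<noteq> q" "w1 \<noteq> q" "w2 \<noteq> q" using q(2) w(3,4) by auto
  hence "cos_angle (a - q) (b - q) \<le> cos_angle (of_real l1 * (w1 - q)) (of_real l2 * (w2 - q))"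
    using 1 2 by (intro cos_angle_le_subsegment[OF _ _ 1(4) _ 2(4)]) auto
  thus ?thesis using cos_angle_scale_pos[OF 1(1) 2(1)] by simp
qed

lemma regular_polygon_cap_nonpos:
  fixes G :: "complex \<Rightarrow> real"
  assumes r: "r > 0" and \<gamma>: "0 < \<gamma>" "\<gamma> < pi"
    and w: "vertex k c r th J1 = c + of_real r * cis (\<mu> - \<gamma>)"
      "vertex k c r th J2 = c + of_real r * cis (\<mu> + \<gamma>)"
    and G: "\<And>x y s. G ((1 - s) *\<^sub>R x + s *\<^sub>R y) = (1 - s) * G x + s * G y"
    and cap: "\<And>J. r * cos \<gamma> \<le> inner (cis \<mu>) (vertex k c r th J - c) \<Longrightarrow> G (vertex k c r th J) \<le> 0"
    and z: "z \<in> regular_polygon k c r th" "r * cos \<gamma> \<le> inner (cis \<mu>) (z - c)"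
  shows "G z \<le> 0"
proof -
  define L where "L z = inner (cis \<mu>) (z - c) - r * cos \<gamma>" for z
  have L: "L ((1 - s) *\<^sub>R x + s *\<^sub>R y) = (1 - s) * L x + s * L y" for s x y
    unfolding L_def by (simp add: inner_diff_right algebra_simps)
  have "inner (cis \<mu>) (vertex k c r th J1 - c) = r * cos \<gamma>"
    "inner (cis \<mu>) (vertex k c r th J2 - c) = r * cos \<gamma>"
    unfolding w scaleR_conv_of_real[symmetric] by (simp_all add: inner_cis_cis)
  hence Gw: "G (c + of_real r * cis (\<mu> - \<gamma>)) \<le> 0" "G (c + of_real r * cis (\<mu> + \<gamma>)) \<le> 0"
    using cap[of J1] cap[of J2] unfolding w by simp_all
  have rim: "G z \<le> 0" if "z \<in> regular_polygon k c r th" "L z = 0" for z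
  proof -
    have "norm (z - c) \<le> r"
      using regular_polygon_subset_cball[of r k c th] r that(1) by (auto simp: dist_norm norm_minus_commute)
    hence "z \<in> closed_segment (c + of_real r * cis (\<mu> - \<gamma>)) (c + of_real r * cis (\<mu> + \<gamma>))"
      using cball_chord_in_segment[OF r \<gamma>] that(2) unfolding L_def by simp
    then obtain u where "0 \<le> u" "u \<le> 1"
        "z = (1 - u) *\<^sub>R (c + of_real r * cis (\<mu> - \<gamma>)) + u *\<^sub>R (c + of_real r * cis (\<mu> + \<gamma>))"
      unfolding closed_segment_def by blast
    thus ?thesis using Gw G by (simp add: add_nonpos_nonpos mult_nonneg_nonpos)
  qed
  show ?thesis
    using convex_hull_cap_nonpos[OF L G, of "(\<lambda>j. vertex k c r th (int j)) ` {..<k}" z] cap rim z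
    unfolding regular_polygon_eq_convex_hull_vertices L_def by fastforce
qed

lemma regular_polygon_cos_angle_le:
  assumes k: "k \<ge> 4" and r: "r > 0" and t: "t \<noteq> 0"
    and q: "q \<in> regular_polygon k c r th" "cross (b - a) (q - a) > 0"
    and line: "\<And>z. z \<in> regular_polygon k c r th \<Longrightarrow> cross (b - a) (z - a) = 0 \<Longrightarrow>
      z \<in> closed_segment a b"
    and normals: "\<And>w n. w \<in> regular_polygon k c r th \<Longrightarrow> cross (b - a) (w - a) > 0 \<Longrightarrow>
      (\<forall>z\<in>regular_polygon k c r th. inner n (z - w) \<le> 0) \<Longrightarrow> inner n t \<ge> 0"
  shows "cos_angle (a - q) (b - q) \<le> sqrt 2 / 2"
proof -
  let ?S = "regular_polygon k c r th"
  obtain \<mu> \<gamma> J1 J2 where \<gamma>: "pi / 4 \<le> \<gamma>" "\<gamma> < pi"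
    and w1: "vertex k c r th J1 = c + of_real r * cis (\<mu> - \<gamma>)"
    and w2: "vertex k c r th J2 = c + of_real r * cis (\<mu> + \<gamma>)"
    and cap: "\<And>J. r * cos \<gamma> \<le> inner (cis \<mu>) (vertex k c r th J - c) \<Longrightarrow>
       \<exists>n. (\<forall>z\<in>?S. inner n (z - vertex k c r th J) \<le> 0) \<and> inner n (cis (Arg (- t))) > 0"
    by (rule regular_polygon_cap_normals_towards[OF k r, where c = c and th = th]) blast
  define G where "G z = cross (b - a) (z - a)" for z
  have "0 < k" using k by simp
  have "cis (Arg (- t)) = - (inverse (norm t) *\<^sub>R t)" using t by (simp add: cis_Arg sgn_div_norm)
  hence against_t: "inner n (cis (Arg (- t))) > 0 \<Longrightarrow> inner n t < 0" for n
    using t by (auto simp: mult_less_0_iff)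
  have below: "G z \<le> 0" if "z \<in> ?S" "r * cos \<gamma> \<le> inner (cis \<mu>) (z - c)" for z
  proof (rule regular_polygon_cap_nonpos[OF r _ _ w1 w2 _ _ that])
    show "G ((1 - s) *\<^sub>R x + s *\<^sub>R y) = (1 - s) * G x + s * G y" for s x y
      unfolding G_def cross_eq_inner by (simp add: inner_diff_right algebra_simps)
    fix J assume "r * cos \<gamma> \<le> inner (cis \<mu>) (vertex k c r th J - c)"
    with cap obtain n where "\<forall>z\<in>?S. inner n (z - vertex k c r th J) \<le> 0" "inner n t < 0"
      using against_t by blast
    thus "G (vertex k c r th J) \<le> 0"
      using normals[OF vertex_in_regular_polygon[OF \<open>0 < k\<close>]] unfolding G_def by (meson not_le)
  qed (use \<gamma> in auto)
  define w1 w2 where "w1 = c + of_real r * cis (\<mu> - \<gamma>)" and "w2 = c + of_real r * cis (\<mu> + \<gamma>)"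
  from \<open>0 < k\<close> have w12: "w1 \<in> ?S" "w2 \<in> ?S" unfolding w1_def w2_def w1[symmetric] w2[symmetric]
    by (rule vertex_in_regular_polygon)+
  moreover have "inner (cis \<mu>) (w1 - c) = r * cos \<gamma>" "inner (cis \<mu>) (w2 - c) = r * cos \<gamma>"
    unfolding w1_def w2_def scaleR_conv_of_real[symmetric] by (simp_all add: inner_cis_cis)
  ultimately have Gw: "G w1 \<le> 0" "G w2 \<le> 0" using below by simp_all
  have "cos_angle (a - q) (b - q) \<le> cos_angle (w1 - q) (w2 - q)"
    using cos_angle_le_if_segment_separates[OF convex_regular_polygon q w12] Gw line
    unfolding G_def by blast
  also have "\<dots> \<le> cos \<gamma>"
  proof (rule inscribed_angle_cos_le[OF r _ _ w1_def w2_def])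
    show "norm (q - c) \<le> r"
      using regular_polygon_subset_cball[of r k c th] r q(1) by (auto simp: dist_norm norm_minus_commute)
    show "inner (cis \<mu>) (q - c) \<le> r * cos \<gamma>" using below[OF q(1)] q(2) unfolding G_def by fastforce
    show "q \<noteq> w1" "q \<noteq> w2" using Gw q(2) unfolding G_def by auto
  qed
  also have "\<dots> \<le> cos (pi / 4)" using \<gamma> by (intro cos_monotone_0_pi_le) auto
  finally show ?thesis by (simp add: cos_45)
qed

lemma inner_scaleR_ii_mult: "inner (K *\<^sub>R (\<i> * d)) w = K * cross d w"
  by (simp add: cross_eq_inner)

lemma translation_frontier_diff:
  fixes S :: "complex set"
  assumes "closed S" "x \<in> frontier ((+) t ` S)"
  shows "x - t \<in> S"
  using assms frontier_subset_closed by (fastforce simp: frontier_translation)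

lemma cos_angle_le_on_translation_side:
  assumes k: "k \<ge> 4" and r: "r > 0" and S: "S = regular_polygon k c r th" "interior S \<noteq> {}"
    and x: "x \<in> frontier S \<inter> frontier ((+) t ` S)" and y: "y \<in> frontier S \<inter> frontier ((+) t ` S)"
    and t: "cross (y - x) t > 0"
    and p: "p \<in> S" "cross (y - x) (p - x) > 0"
  shows "cos_angle (x - p) (y - p) \<le> sqrt 2 / 2"
proof -
  have cS: "convex S" "closed S" unfolding S(1) by (rule convex_regular_polygon closed_regular_polygon)+
  have xt: "x - t \<in> S" "y - t \<in> S" using x y translation_frontier_diff[OF cS(2)] by blast+
  have xy: "x \<in> frontier S" "y \<in> frontier S" "x \<noteq> y" using x y t by auto
  show ?thesis
  proof (rule regular_polygon_cos_angle_le[OF k r _ p[unfolded S(1)]])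
    show "t \<noteq> 0" using t by auto
    fix z assume "z \<in> regular_polygon k c r th" "cross (y - x) (z - x) = 0"
    moreover have "cross (y - x) (p - x) * cross (y - x) ((x - t) - x) < 0"
      using p(2) t by (simp add: cross_minus_right mult_pos_neg)
    ultimately show "z \<in> closed_segment x y"
      using convex_line_inter_in_segment[OF cS S(2) xy _ _ p(1) xt(1)] S(1) by blast
  next
    fix w n assume "w \<in> regular_polygon k c r th" "cross (y - x) (w - x) > 0"
      "\<forall>z\<in>regular_polygon k c r th. inner n (z - w) \<le> 0"
    thus "inner n t \<ge> 0"
      using supporting_normal_beyond_chord[OF cS S(2) xy(1,2) xt, of w n] t S(1)
      by (auto intro: mult_pos_pos)
  qed
qed

lemma common_point_on_chord_line_in_segment:
  fixes S :: "complex set"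
  assumes S: "convex S" "closed S" and int: "interior S \<inter> interior ((+) t ` S) \<noteq> {}"
    and x: "x \<in> frontier S \<inter> frontier ((+) t ` S)" and y: "y \<in> frontier S \<inter> frontier ((+) t ` S)"
    and K: "cross (y - x) t \<noteq> 0"
    and p: "p \<in> S \<inter> (+) t ` S" "cross (y - x) (p - x) = 0"
  shows "p \<in> closed_segment x y"
proof -
  define K where "K = cross (y - x) t"
  have S': "convex ((+) t ` S)" "closed ((+) t ` S)"
    using S by (auto intro: convex_translation closed_translation)
  obtain m where m: "m \<in> interior S" "m \<in> interior ((+) t ` S)" using int by blast
  hence ne: "interior S \<noteq> {}" "interior ((+) t ` S) \<noteq> {}" by auto
  have xy: "x \<noteq> y" using K by auto
  have xt: "x - t \<in> S" using x translation_frontier_diff[OF S(2)] by blast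
  have "x \<in> S" using x S(2) frontier_subset_closed by blast
  hence "x + t \<in> (+) t ` S" by (metis add.commute imageI)
  show ?thesis
  proof (cases "\<exists>u\<in>S. cross (y - x) (u - x) * K > 0")
    case True
    then obtain u where "u \<in> S" "cross (y - x) (u - x) * cross (y - x) ((x - t) - x) < 0"
      unfolding K_def by (auto simp: cross_minus_right)
    thus ?thesis using convex_line_inter_in_segment[OF S ne(1) _ _ xy _ p(2) _ xt] x y p(1) by blast
  next
    case False
    have "K *\<^sub>R (\<i> * (y - x)) \<noteq> 0" using K xy unfolding K_def by simp
    moreover have "inner (K *\<^sub>R (\<i> * (y - x))) (u - x) \<le> 0" if "u \<in> S" for u
      using False that unfolding inner_scaleR_ii_mult by (auto simp: mult.commute)
    ultimately have "inner (K *\<^sub>R (\<i> * (y - x))) (m - x) < 0"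
      using m(1) by (rule interior_in_open_halfspace)
    hence "cross (y - x) (m - x) * cross (y - x) ((x + t) - x) < 0"
      unfolding inner_scaleR_ii_mult K_def by (simp add: mult.commute)
    thus ?thesis
      using convex_line_inter_in_segment[OF S' ne(2) _ _ xy _ p(2) _ \<open>x + t \<in> (+) t ` S\<close>]
        x y p(1) m(2) interior_subset by blast
  qed
qed

lemma common_frontier_components_nonparallel:
  fixes S :: "complex set"
  assumes S: "convex S" "closed S" "interior S \<noteq> {}" and t: "t \<noteq> 0"
    and x: "x \<in> frontier S \<inter> frontier ((+) t ` S)" and y: "y \<in> frontier S \<inter> frontier ((+) t ` S)"
    and "connected_component_set (frontier S \<inter> frontier ((+) t ` S)) x \<noteq>
         connected_component_set (frontier S \<inter> frontier ((+) t ` S)) y"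
  shows "cross (y - x) t \<noteq> 0"
proof
  assume "cross (y - x) t = 0"
  hence "cross t (y - x) = 0" unfolding cross_def by (simp add: algebra_simps)
  hence "closed_segment x y \<subseteq> frontier S \<inter> frontier ((+) t ` S)"
    by (rule common_frontier_parallel_segment[OF S t x y])
  hence "y \<in> connected_component_set (frontier S \<inter> frontier ((+) t ` S)) x"
    using connected_component_maximal[OF _ connected_segment] by blast
  thus False using assms(7) connected_component_eq by blast
qed

lemma regular_polygon_translate_cos_angle_le:
  assumes k: "k \<ge> 4" and r: "r > 0" and S: "S = regular_polygon k c r th"
    and int: "interior S \<inter> interior ((+) t ` S) \<noteq> {}"
    and x: "x \<in> frontier S \<inter> frontier ((+) t ` S)" and y: "y \<in> frontier S \<inter> frontier ((+) t ` S)"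
    and t: "cross (y - x) t > 0"
    and p: "p \<in> S \<inter> (+) t ` S" "p \<noteq> x" "p \<noteq> y"
  shows "cos_angle (x - p) (y - p) \<le> sqrt 2 / 2"
proof -
  have S': "(+) t ` S = regular_polygon k (t + c) r th" "(+) (- t) ` ((+) t ` S) = S"
    unfolding S translation_regular_polygon by (simp_all add: image_image)
  have ne: "interior S \<noteq> {}" "interior ((+) t ` S) \<noteq> {}" using int by auto
  consider "cross (y - x) (p - x) > 0" | "cross (y - x) (p - x) < 0" | "cross (y - x) (p - x) = 0"
    by linarith
  thus ?thesis
  proof cases
    case 1
    thus ?thesis using cos_angle_le_on_translation_side[OF k r S ne(1) x y t] p(1) by blast
  next
    case 2
    have "cross (x - y) (p - y) = - cross (y - x) (p - x)" "cross (x - y) (- t) = cross (y - x) t"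
      unfolding cross_def by (simp_all add: algebra_simps)
    hence "cos_angle (y - p) (x - p) \<le> sqrt 2 / 2"
      using cos_angle_le_on_translation_side[OF k r S'(1) ne(2), of y "- t" x p] x y t p(1) 2
      unfolding S'(2) by auto
    thus ?thesis by (simp add: cos_angle_commute)
  next
    case 3
    have "p \<in> closed_segment x y"
      using common_point_on_chord_line_in_segment[OF _ _ int x y _ p(1) 3] t S
        convex_regular_polygon closed_regular_polygon by auto
    thus ?thesis using cos_angle_opposite p(2,3) by (simp add: order_trans[of _ 0])
  qed
qed

theorem lemma8:
  fixes k :: nat and \<sigma> \<sigma>' :: "complex set" and t p x y :: complex
  assumes "k \<ge> 4"
    and "is_regular_polygon k \<sigma>"
    and "\<sigma>' = (\<lambda>z. z + t) ` \<sigma>"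
    and "\<sigma>' \<noteq> \<sigma>"
    and "interior \<sigma> \<inter> interior \<sigma>' \<noteq> {}"
    and "p \<in> \<sigma> \<inter> \<sigma>'"
    and "x \<in> frontier \<sigma> \<inter> frontier \<sigma>'"
    and "y \<in> frontier \<sigma> \<inter> frontier \<sigma>'"
    and "connected_component_set (frontier \<sigma> \<inter> frontier \<sigma>') x \<noteq>
         connected_component_set (frontier \<sigma> \<inter> frontier \<sigma>') y"
    and "p \<noteq> x" and "p \<noteq> y"
  shows "angle_at x p y \<ge> pi / 4"
proof -
  obtain c r th where r: "r > 0" and \<sigma>: "\<sigma> = regular_polygon k c r th"
    using assms(2) unfolding is_regular_polygon_def by blast
  have \<sigma>': "\<sigma>' = (+) t ` \<sigma>" using assms(3) by (simp add: add.commute)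
  have "t \<noteq> 0" using assms(4) \<sigma>' by auto
  hence "cross (y - x) t \<noteq> 0"
    using common_frontier_components_nonparallel[of \<sigma> t x y] assms(5,7-9) \<sigma> \<sigma>'
      convex_regular_polygon closed_regular_polygon by auto
  moreover have "cross (x - y) t = - cross (y - x) t" unfolding cross_def by (simp add: algebra_simps)
  ultimately have "cos_angle (x - p) (y - p) \<le> sqrt 2 / 2 \<or> cos_angle (y - p) (x - p) \<le> sqrt 2 / 2"
    using regular_polygon_translate_cos_angle_le[OF assms(1) r \<sigma>, of t] assms(5-8,10,11) \<sigma>'
    by (cases "cross (y - x) t > 0") auto
  hence "cos_angle (x - p) (y - p) \<le> cos (pi / 4)" by (auto simp: cos_angle_commute cos_45)
  hence "arccos (cos (pi / 4)) \<le> arccos (cos_angle (x - p) (y - p))"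
    using cos_angle_ge_minus_1 by (intro arccos_le_arccos) auto
  thus ?thesis using arccos_cos[of "pi / 4"] unfolding angle_at_def cos_angle_def[symmetric] by simp
qed

end
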